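(* For every positive integer $g$, there exists a $2$-coverable loopless binary matroid $M$ such that in any rank-preserving rainbow circuit-free coloring of $M$, one of the colors is used at least $g$ times.
   Context: A coloring of the ground set $S$ of $M$ is a partition of $S$ into nonempty color classes; it is rainbow circuit-free if no circuit of $M$ has all its elements of pairwise different colors, and rank-preserving if the number of colors equals the rank of $M$. A matroid is $k$-coverable if its ground set can be covered by at most $k$ independent sets. A matroid is binary if it is representable over $GF(2)$. *)

theory Defs
  imports Main "HOL-Library.Z2" "HOL-Library.Disjoint_Sets"
begin

definition matroid :: "'a set \<Rightarrow> ('a set \<Rightarrow> bool) \<Rightarrow> bool" where
  "matroid S indep \<longleftrightarrow>
     finite S \<and>
     (\<forall>X. indep X \<longrightarrow> X \<subseteq> S) \<and>
     indep {} \<and>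
     (\<forall>X Y. indep X \<longrightarrow> Y \<subseteq> X \<longrightarrow> indep Y) \<and>
     (\<forall>X Y. indep X \<longrightarrow> indep Y \<longrightarrow> card X < card Y \<longrightarrow>
        (\<exists>y\<in>Y - X. indep (insert y X)))"

definition circuit :: "'a set \<Rightarrow> ('a set \<Rightarrow> bool) \<Rightarrow> 'a set \<Rightarrow> bool" where
  "circuit S indep C \<longleftrightarrow> C \<subseteq> S \<and> \<not> indep C \<and> (\<forall>D. D \<subset> C \<longrightarrow> indep D)"

definition mrank :: "'a set \<Rightarrow> ('a set \<Rightarrow> bool) \<Rightarrow> nat" where
  "mrank S indep = Max (card ` {X. X \<subseteq> S \<and> indep X})"

definition loopless :: "'a set \<Rightarrow> ('a set \<Rightarrow> bool) \<Rightarrow> bool" where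
  "loopless S indep \<longleftrightarrow> (\<forall>e\<in>S. indep {e})"

definition coverable :: "nat \<Rightarrow> 'a set \<Rightarrow> ('a set \<Rightarrow> bool) \<Rightarrow> bool" where
  "coverable k S indep \<longleftrightarrow>
     (\<exists>F. finite F \<and> card F \<le> k \<and> (\<forall>I\<in>F. indep I) \<and> S \<subseteq> \<Union>F)"

text \<open>Linear independence over GF(2) of the family (v x) indexed by x in X, vectors in GF(2)^nat:
  over GF(2) a nontrivial linear combination is the sum over a nonempty subfamily.\<close>
definition gf2_indep :: "('a \<Rightarrow> nat \<Rightarrow> bit) \<Rightarrow> 'a set \<Rightarrow> bool" where
  "gf2_indep v X \<longleftrightarrow>
     (\<forall>Y. Y \<subseteq> X \<longrightarrow> Y \<noteq> {} \<longrightarrow> (\<lambda>i. \<Sum>y\<in>Y. v y i) \<noteq> (\<lambda>i. 0))"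

definition binary :: "'a set \<Rightarrow> ('a set \<Rightarrow> bool) \<Rightarrow> bool" where
  "binary S indep \<longleftrightarrow>
     (\<exists>v :: 'a \<Rightarrow> nat \<Rightarrow> bit. \<forall>X. X \<subseteq> S \<longrightarrow> (indep X \<longleftrightarrow> gf2_indep v X))"

text \<open>A coloring is a partition P of S into nonempty color classes.\<close>
definition rainbow_circuit_free :: "'a set \<Rightarrow> ('a set \<Rightarrow> bool) \<Rightarrow> 'a set set \<Rightarrow> bool" where
  "rainbow_circuit_free S indep P \<longleftrightarrow>
     \<not> (\<exists>C. circuit S indep C \<and> (\<forall>B\<in>P. card (C \<inter> B) \<le> 1))"

definition rank_preserving :: "'a set \<Rightarrow> ('a set \<Rightarrow> bool) \<Rightarrow> 'a set set \<Rightarrow> bool" where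
  "rank_preserving S indep P \<longleftrightarrow> card P = mrank S indep"

end

theory Submission
  imports Defs "HOL-Library.Nat_Bijection" "HOL-Library.Function_Algebras"
begin

text \<open>
  Let \<open>M\<close> be the binary matroid of the columns of a generator matrix of the Reed--Muller code
  \<open>RM(g, 2g + 1)\<close>, indexed by the points of \<open>GF(2)^(2g+1)\<close>. The points of weight at most \<open>g\<close>
  and those of weight more than \<open>g\<close> are both independent, so \<open>M\<close> is 2-coverable.

  In a rank-preserving rainbow-circuit-free colouring, a transversal \<open>T\<close> of the colour classes is
  rainbow, hence independent, hence a basis, and every element's fundamental circuit with respect to
  \<open>T\<close> contains the representative of its own class. If for every class \<open>B\<close> the fundamental
  cocircuit of its representative left \<open>B\<close>, the relation "some element of \<open>B'\<close> needs the
  representative of \<open>B\<close>" would contain a chordless cycle, and summing the fundamental circuits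
  along it gives a rainbow dependent set, because each representative on the cycle is counted twice.
  So some class contains a fundamental cocircuit. That cocircuit contains the support of a nonzero
  codeword of \<open>RM(g, 2g + 1)\<close>, i.e. the non-zeros of a nonzero polynomial of degree at most \<open>g\<close>
  in \<open>2g + 1\<close> variables, and there are at least \<open>2^(g+1) > g\<close> of them.
\<close>

section \<open>Linear algebra over GF(2)\<close>

text \<open>The library simplifies \<open>+\<close> on \<open>bit\<close> to XOR, which hides the field structure.\<close>
declare add_bit_eq_xor [simp del]

lemma add_self_gf2_vector [simp]: "(f :: 'a \<Rightarrow> bit) + f = 0"
  by (simp add: fun_eq_iff)

lemma add_eq_0_iff_gf2: "(x :: bit) + y = 0 \<longleftrightarrow> x = y"
  by (cases x; cases y) simp_all

lemma add_eq_0_iff_gf2_vector: "(f :: 'a \<Rightarrow> bit) + g = 0 \<longleftrightarrow> f = g"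
  by (simp add: fun_eq_iff add_eq_0_iff_gf2)

lemma sum_fun_apply: "sum f A x = (\<Sum>a\<in>A. f a x)"
  by (induction A rule: infinite_finite_induct) auto

lemma gf2_indep_iff: "gf2_indep v X \<longleftrightarrow> (\<forall>Y\<subseteq>X. Y \<noteq> {} \<longrightarrow> sum v Y \<noteq> 0)"
  by (simp add: gf2_indep_def sum_fun_apply fun_eq_iff)

lemma gf2_indepD: "gf2_indep v X \<Longrightarrow> Y \<subseteq> X \<Longrightarrow> Y \<noteq> {} \<Longrightarrow> sum v Y \<noteq> 0"
  by (simp add: gf2_indep_iff)

lemma gf2_indep_subset: "gf2_indep v X \<Longrightarrow> Y \<subseteq> X \<Longrightarrow> gf2_indep v Y"
  by (auto simp: gf2_indep_def)

lemma sum_symmetric_difference: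
  fixes f :: "'a \<Rightarrow> 'i \<Rightarrow> bit"
  assumes "finite A" "finite B"
  shows "sum f (A - B \<union> (B - A)) = sum f A + sum f B"
proof -
  have "sum f A + sum f B = sum f (A - B) + sum f (B - A) + (sum f (A \<inter> B) + sum f (A \<inter> B))"
    using assms sum.Int_Diff[of A f B] sum.Int_Diff[of B f A]
    by (simp add: Int_commute ac_simps)
  also have "\<dots> = sum f (A - B \<union> (B - A))"
    using assms by (simp add: sum.union_disjoint Diff_Int_distrib2)
  finally show ?thesis ..
qed

lemma of_nat_gf2: "(of_nat n :: bit) = of_bool (odd n)"
  by (induction n) auto

lemma of_nat_mult_gf2_vector: "of_nat n * (f :: 'a \<Rightarrow> bit) = (if odd n then f else 0)"
  by (simp add: fun_eq_iff of_nat_gf2)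

lemma sum_sum_gf2_vector:
  fixes v :: "'a \<Rightarrow> 'i \<Rightarrow> bit"
  assumes "finite Q" "finite T" "\<And>B. B \<in> Q \<Longrightarrow> Z B \<subseteq> T"
  shows "(\<Sum>B\<in>Q. sum v (Z B)) = sum v {z \<in> T. odd (card {B \<in> Q. z \<in> Z B})}"
proof -
  have "sum v (Z B) = (\<Sum>z\<in>T. if z \<in> Z B then v z else 0)" if "B \<in> Q" for B
    using sum.inter_restrict[OF assms(2), of v "Z B"] assms(3)[OF that] by (simp add: Int_absorb1)
  then have "(\<Sum>B\<in>Q. sum v (Z B)) = (\<Sum>B\<in>Q. \<Sum>z\<in>T. if z \<in> Z B then v z else 0)"
    by simp
  also have "\<dots> = (\<Sum>z\<in>T. \<Sum>B\<in>Q. if z \<in> Z B then v z else 0)"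
    by (rule sum.swap)
  also have "\<dots> = (\<Sum>z\<in>T. if odd (card {B \<in> Q. z \<in> Z B}) then v z else 0)"
    using assms(1) by (simp add: sum.inter_filter[symmetric] of_nat_mult_gf2_vector)
  also have "\<dots> = sum v {z \<in> T. odd (card {B \<in> Q. z \<in> Z B})}"
    using assms(2) by (simp add: sum.inter_filter)
  finally show ?thesis .
qed

lemma sum_of_bool_gf2: "finite A \<Longrightarrow> (\<Sum>x\<in>A. of_bool (P x) :: bit) = of_bool (odd (card {x \<in> A. P x}))"
  by (simp add: sum.inter_filter[symmetric] of_nat_gf2 Int_def flip: of_bool_def)

definition gf2_span :: "('a \<Rightarrow> 'i \<Rightarrow> bit) \<Rightarrow> 'a set \<Rightarrow> ('i \<Rightarrow> bit) set" where
  "gf2_span v X = sum v ` Pow X"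

lemma gf2_span_add:
  assumes "finite X" "a \<in> gf2_span v X" "b \<in> gf2_span v X"
  shows "a + b \<in> gf2_span v X"
proof -
  obtain A B where "A \<subseteq> X" "B \<subseteq> X" "a = sum v A" "b = sum v B"
    using assms(2,3) by (auto simp: gf2_span_def)
  moreover from this have "a + b = sum v (A - B \<union> (B - A))"
    using assms(1) by (simp add: sum_symmetric_difference finite_subset)
  ultimately show ?thesis by (auto simp: gf2_span_def)
qed

lemma sum_in_gf2_span:
  assumes "finite X" "finite Y" "w ` Y \<subseteq> gf2_span v X"
  shows "sum w Y \<in> gf2_span v X"
  using assms(2,3)
proof (induction Y rule: finite_induct)
  case empty
  show ?case by (force simp: gf2_span_def)
next
  case (insert y Y)
  then have "w y + sum w Y \<in> gf2_span v X"
    by (intro gf2_span_add[OF assms(1)]) auto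
  then show ?case
    by (subst sum.insert[OF insert.hyps])
qed

lemma inj_on_sum_gf2_indep:
  assumes "finite X" "gf2_indep v X"
  shows "inj_on (sum v) (Pow X)"
proof (rule inj_onI, rule ccontr)
  fix A B assume A: "A \<in> Pow X" and B: "B \<in> Pow X" and "sum v A = sum v B" "A \<noteq> B"
  then have "sum v (A - B \<union> (B - A)) = 0" "A - B \<union> (B - A) \<noteq> {}"
    using assms(1) by (auto simp: sum_symmetric_difference finite_subset)
  moreover have "A - B \<union> (B - A) \<subseteq> X"
    using A B by blast
  ultimately show False
    using gf2_indepD[OF assms(2)] by blast
qed

lemma card_gf2_span_le: "finite X \<Longrightarrow> card (gf2_span v X) \<le> 2 ^ card X"
  unfolding gf2_span_def by (metis card_Pow card_image_le finite_Pow_iff)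

lemma card_gf2_span_gf2_indep: "finite X \<Longrightarrow> gf2_indep v X \<Longrightarrow> card (gf2_span v X) = 2 ^ card X"
  unfolding gf2_span_def by (simp add: card_image inj_on_sum_gf2_indep card_Pow)

lemma gf2_span_subset:
  assumes "finite X" "finite Y" "w ` Y \<subseteq> gf2_span v X"
  shows "gf2_span w Y \<subseteq> gf2_span v X"
proof
  fix a assume "a \<in> gf2_span w Y"
  then obtain Z where "Z \<subseteq> Y" "a = sum w Z"
    by (auto simp: gf2_span_def)
  then show "a \<in> gf2_span v X"
    using assms sum_in_gf2_span[OF assms(1), of Z w] by (meson finite_subset image_mono order_trans)
qed

lemma card_le_if_gf2_indep_in_span:
  assumes "finite X" "finite Y" "gf2_indep w Y" "w ` Y \<subseteq> gf2_span v X"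
  shows "card Y \<le> card X"
proof -
  have "(2::nat) ^ card Y = card (gf2_span w Y)"
    by (simp add: card_gf2_span_gf2_indep assms(2,3))
  also have "\<dots> \<le> card (gf2_span v X)"
    using gf2_span_subset[OF assms(1,2,4)] assms(1)
    by (intro card_mono) (simp_all add: gf2_span_def)
  also have "\<dots> \<le> 2 ^ card X"
    by (rule card_gf2_span_le[OF assms(1)])
  finally show ?thesis by simp
qed

lemma card_le_if_gf2_indep_supported:
  assumes "finite K" "gf2_indep w Y" "\<And>y i. y \<in> Y \<Longrightarrow> i \<notin> K \<Longrightarrow> w y i = 0"
  shows "card Y \<le> card K"
proof (cases "finite Y")
  case True
  let ?e = "\<lambda>k i. of_bool (i = k) :: bit"
  have "w y = sum ?e {k \<in> K. w y k = 1}" if "y \<in> Y" for y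
  proof
    fix i
    show "w y i = sum ?e {k \<in> K. w y k = 1} i"
      using assms(1) assms(3)[OF that, of i] by (cases "i \<in> K") (auto simp: sum_fun_apply of_bool_def)
  qed
  then have "w ` Y \<subseteq> gf2_span ?e K"
    by (auto simp: gf2_span_def)
  then show ?thesis
    using card_le_if_gf2_indep_in_span[OF assms(1) True assms(2)] by blast
qed simp

lemma gf2_indep_insert:
  assumes "finite X" "gf2_indep v X" "v x \<notin> gf2_span v X"
  shows "gf2_indep v (insert x X)"
  unfolding gf2_indep_iff
proof (intro allI impI)
  fix Y assume Y: "Y \<subseteq> insert x X" "Y \<noteq> {}"
  show "sum v Y \<noteq> 0"
  proof (cases "x \<in> Y")
    case False
    then show ?thesis using Y gf2_indepD[OF assms(2)] by blast
  next
    case True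
    have "finite Y" using Y(1) assms(1) finite_subset by blast
    then have "sum v Y = v x + sum v (Y - {x})"
      using True by (simp add: sum.remove)
    moreover have "sum v (Y - {x}) \<in> gf2_span v X"
      using Y(1) by (auto simp: gf2_span_def)
    ultimately show ?thesis
      using assms(3) by (auto simp: add_eq_0_iff_gf2_vector)
  qed
qed

lemma gf2_indep_exchange:
  assumes "finite X" "finite Y" "gf2_indep v X" "gf2_indep v Y" "card X < card Y"
  shows "\<exists>y\<in>Y - X. gf2_indep v (insert y X)"
proof (rule ccontr)
  assume "\<not> ?thesis"
  then have "v y \<in> gf2_span v X" if "y \<in> Y" for y
  proof (cases "y \<in> X")
    case True
    then have "{y} \<in> Pow X" by simp
    then show ?thesis unfolding gf2_span_def by (rule image_eqI[rotated]) simp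
  qed (use that gf2_indep_insert[OF assms(1,3)] in blast)
  then have "card Y \<le> card X"
    by (intro card_le_if_gf2_indep_in_span[OF assms(1,2,4)]) blast
  with assms(5) show False by simp
qed

lemma matroid_gf2_indep:
  assumes "finite S"
  shows "matroid S (\<lambda>X. X \<subseteq> S \<and> gf2_indep v X)"
  unfolding matroid_def
proof (intro conjI allI impI)
  fix X Y assume X: "X \<subseteq> S \<and> gf2_indep v X" and Y: "Y \<subseteq> S \<and> gf2_indep v Y"
    and "card X < card Y"
  then obtain y where "y \<in> Y - X" "gf2_indep v (insert y X)"
    using gf2_indep_exchange[of X Y v] assms finite_subset by blast
  with X Y show "\<exists>y\<in>Y - X. insert y X \<subseteq> S \<and> gf2_indep v (insert y X)"
    by blast
qed (use assms gf2_indep_subset in \<open>auto simp: gf2_indep_iff\<close>)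

section \<open>Rainbow sets in matroids\<close>

lemma circuit_in_dependent:
  assumes "finite X" "X \<subseteq> S" "\<not> indep X"
  shows "\<exists>C\<subseteq>X. circuit S indep C"
  using assms
proof (induction X rule: finite_psubset_induct)
  case (psubset X)
  show ?case
  proof (cases "\<forall>D. D \<subset> X \<longrightarrow> indep D")
    case True
    with psubset.prems show ?thesis unfolding circuit_def by blast
  next
    case False
    then obtain D where "D \<subset> X" "\<not> indep D" by blast
    with psubset.IH[of D] psubset.prems(1) show ?thesis by blast
  qed
qed

definition rainbow :: "'a set set \<Rightarrow> 'a set \<Rightarrow> bool" where
  "rainbow P Y \<longleftrightarrow> (\<forall>B\<in>P. card (Y \<inter> B) \<le> 1)"

lemma rainbowI:
  assumes "\<And>B. B \<in> P \<Longrightarrow> \<exists>a. Y \<inter> B \<subseteq> {a}"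
  shows "rainbow P Y"
  unfolding rainbow_def
proof
  fix B assume "B \<in> P"
  then obtain a where "Y \<inter> B \<subseteq> {a}"
    using assms by blast
  then show "card (Y \<inter> B) \<le> 1"
    using card_mono[of "{a}" "Y \<inter> B"] by simp
qed

lemma rainbow_subset: "rainbow P Y \<Longrightarrow> finite Y \<Longrightarrow> Z \<subseteq> Y \<Longrightarrow> rainbow P Z"
  unfolding rainbow_def by (meson Int_mono card_mono finite_Int order.refl order.trans)

lemma indep_if_rainbow:
  assumes "finite S" "rainbow_circuit_free S indep P" "Y \<subseteq> S" "rainbow P Y"
  shows "indep Y"
proof (rule ccontr)
  assume "\<not> indep Y"
  then obtain C where "C \<subseteq> Y" "circuit S indep C"
    using circuit_in_dependent[OF finite_subset[OF assms(3,1)] assms(3)] by blast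
  moreover from this have "rainbow P C"
    using rainbow_subset[OF assms(4) finite_subset[OF assms(3,1)]] by blast
  ultimately show False
    using assms(2) unfolding rainbow_circuit_free_def rainbow_def by blast
qed

lemma card_le_mrank: "finite S \<Longrightarrow> X \<subseteq> S \<Longrightarrow> indep X \<Longrightarrow> card X \<le> mrank S indep"
  unfolding mrank_def by (auto intro: Max_ge)

section \<open>Chordless cycles\<close>

lemma funpow_in_closed_set: "s ` Q \<subseteq> Q \<Longrightarrow> x \<in> Q \<Longrightarrow> (s ^^ k) x \<in> Q"
  by (induction k) auto

lemma orbit_avoiding_successor:
  assumes "s ` Q \<subseteq> Q" "inj_on s Q" "B \<in> Q" "B' \<in> Q" "B' \<noteq> s B"
  obtains Q' where "Q' \<subseteq> Q - {s B}" "B' \<in> Q'" "\<And>x. x \<in> Q' \<Longrightarrow> x \<noteq> B \<Longrightarrow> s x \<in> Q'"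
proof
  let ?orbit = "{(s ^^ k) B' | k. \<forall>j<k. (s ^^ j) B' \<noteq> B}"
  show "B' \<in> ?orbit"
    by force
  show "s x \<in> ?orbit" if x: "x \<in> ?orbit" and "x \<noteq> B" for x
  proof -
    obtain k where "x = (s ^^ k) B'" "\<forall>j<k. (s ^^ j) B' \<noteq> B"
      using x by blast
    then have "s x = (s ^^ Suc k) B'" "\<forall>j<Suc k. (s ^^ j) B' \<noteq> B"
      using \<open>x \<noteq> B\<close> less_Suc_eq by auto
    then show ?thesis by blast
  qed
  have "s B \<noteq> (s ^^ k) B'" if "\<forall>j<k. (s ^^ j) B' \<noteq> B" for k
  proof (cases k)
    case (Suc k')
    have "(s ^^ k') B' \<noteq> B"
      using that Suc by blast
    then show ?thesis
      using Suc inj_onD[OF assms(2), of B "(s ^^ k') B'"] assms(3,4)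
        funpow_in_closed_set[OF assms(1)] by auto
  qed (use assms(5) in simp)
  then show "?orbit \<subseteq> Q - {s B}"
    using funpow_in_closed_set[OF assms(1,4)] by blast
qed

lemma finite_chordless_cycle:
  assumes "finite P" "P \<noteq> {}" "\<And>B. B \<in> P \<Longrightarrow> \<exists>B'\<in>P. R B B'"
  obtains Q s where "Q \<subseteq> P" "Q \<noteq> {}" "bij_betw s Q Q" "\<And>B. B \<in> Q \<Longrightarrow> R B (s B)"
    "\<And>B B'. B \<in> Q \<Longrightarrow> B' \<in> Q \<Longrightarrow> R B B' \<Longrightarrow> B' = s B"
proof -
  define cycle where "cycle Q s \<longleftrightarrow> Q \<subseteq> P \<and> Q \<noteq> {} \<and> s ` Q \<subseteq> Q \<and> (\<forall>B\<in>Q. R B (s B))"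
    for Q s
  obtain s0 where "\<forall>B\<in>P. s0 B \<in> P \<and> R B (s0 B)"
    using assms(3) by metis
  then have "cycle P s0"
    using assms(2) by (auto simp: cycle_def)
  then obtain n where "\<exists>Q s. cycle Q s \<and> card Q = n"
    and "\<And>m. m < n \<Longrightarrow> \<not> (\<exists>Q s. cycle Q s \<and> card Q = m)"
    using exists_least_iff[of "\<lambda>n. \<exists>Q s. cycle Q s \<and> card Q = n"] by blast
  then obtain Q s where "cycle Q s" and min: "\<And>Q' s'. cycle Q' s' \<Longrightarrow> card Q \<le> card Q'"
    by (metis not_le)
  then have Q: "Q \<subseteq> P" "Q \<noteq> {}" "s ` Q \<subseteq> Q" "\<And>B. B \<in> Q \<Longrightarrow> R B (s B)"
    by (auto simp: cycle_def)
  have "finite Q"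
    using Q(1) assms(1) finite_subset by blast
  have "cycle (s ` Q) s"
    using Q by (auto simp: cycle_def)
  then have "card Q \<le> card (s ` Q)"
    by (rule min)
  then have "s ` Q = Q"
    using card_image_le[OF \<open>finite Q\<close>, of s] card_subset_eq[OF \<open>finite Q\<close> Q(3)] by linarith
  then have "bij_betw s Q Q"
    using \<open>finite Q\<close> by (simp add: bij_betw_def eq_card_imp_inj_on)
  moreover have "B' = s B" if B: "B \<in> Q" "B' \<in> Q" and "R B B'" for B B'
  proof (rule ccontr)
    assume "B' \<noteq> s B"
    then obtain Q' where Q': "Q' \<subseteq> Q - {s B}" "B' \<in> Q'" "\<And>x. x \<in> Q' \<Longrightarrow> x \<noteq> B \<Longrightarrow> s x \<in> Q'"
      using orbit_avoiding_successor[OF Q(3) _ B] \<open>bij_betw s Q Q\<close>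
      by (metis bij_betw_def)
    have "cycle Q' (s(B := B'))"
      using Q' Q \<open>R B B'\<close> by (auto simp: cycle_def)
    then have "card Q \<le> card Q'"
      by (rule min)
    moreover have "card Q' < card Q"
      using Q' \<open>finite Q\<close> B(1) Q(3) by (intro psubset_card_mono) auto
    ultimately show False by simp
  qed
  ultimately show ?thesis
    using that Q by blast
qed

section \<open>Rainbow-circuit-free colourings of binary matroids\<close>

definition gf2_basis :: "('a \<Rightarrow> nat \<Rightarrow> bit) \<Rightarrow> 'a set \<Rightarrow> 'a set \<Rightarrow> bool" where
  "gf2_basis v S T \<longleftrightarrow> T \<subseteq> S \<and> gf2_indep v T \<and> v ` S \<subseteq> gf2_span v T"

text \<open>For a basis \<open>T\<close> the set \<open>Z\<close> below is unique, and this is the fundamental cocircuit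
  of \<open>t\<close>: the elements \<open>x\<close> for which \<open>T - {t} \<union> {x}\<close> is again a basis.\<close>
definition fundamental_cocircuit :: "('a \<Rightarrow> nat \<Rightarrow> bit) \<Rightarrow> 'a set \<Rightarrow> 'a set \<Rightarrow> 'a \<Rightarrow> 'a set" where
  "fundamental_cocircuit v S T t = {x \<in> S. \<exists>Z\<subseteq>T. t \<in> Z \<and> sum v Z = v x}"

locale transversal =
  fixes S :: "'a set" and P :: "'a set set" and t :: "'a set \<Rightarrow> 'a"
  assumes finite_S: "finite S"
    and partition: "partition_on S P"
    and t_in_block: "\<And>B. B \<in> P \<Longrightarrow> t B \<in> B"
begin

lemma finite_P: "finite P"
  using finite_S partition_onD1[OF partition] by (simp add: finite_UnionD)

lemma block_subset: "B \<in> P \<Longrightarrow> B \<subseteq> S"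
  using partition_onD1[OF partition] by blast

lemma block_eqI: "B \<in> P \<Longrightarrow> B' \<in> P \<Longrightarrow> x \<in> B \<Longrightarrow> x \<in> B' \<Longrightarrow> B = B'"
  using disjointD[OF partition_onD2[OF partition]] by blast

lemma transversal_Int_block: "B \<in> P \<Longrightarrow> t ` P \<inter> B = {t B}"
  using block_eqI t_in_block by blast

lemma transversal_subset: "t ` P \<subseteq> S"
  using t_in_block block_subset by blast

lemma rainbow_transversal: "rainbow P (t ` P)"
  by (rule rainbowI) (use transversal_Int_block in blast)

lemma card_transversal: "card (t ` P) = card P"
  by (rule card_image, rule inj_onI) (metis block_eqI t_in_block)

end

locale gf2_transversal = transversal +
  fixes v :: "'a \<Rightarrow> nat \<Rightarrow> bit"
  assumes basis: "gf2_basis v S (t ` P)"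
begin

definition rep :: "'a \<Rightarrow> 'a set" where
  "rep x = (SOME Z. Z \<subseteq> t ` P \<and> sum v Z = v x)"

lemma
  assumes "x \<in> S"
  shows rep_subset: "rep x \<subseteq> t ` P" and sum_rep: "sum v (rep x) = v x"
proof -
  have "v ` S \<subseteq> gf2_span v (t ` P)"
    using basis by (simp add: gf2_basis_def)
  with assms obtain Z where "Z \<in> Pow (t ` P)" "v x = sum v Z"
    unfolding gf2_span_def by blast
  then have "Z \<subseteq> t ` P \<and> sum v Z = v x"
    by simp
  then have rep: "rep x \<subseteq> t ` P \<and> sum v (rep x) = v x"
    unfolding rep_def by (rule someI)
  then show "rep x \<subseteq> t ` P"
    by (rule conjunct1)
  from rep show "sum v (rep x) = v x"
    by (rule conjunct2)
qed

lemma finite_rep: "x \<in> S \<Longrightarrow> finite (rep x)"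
  by (rule finite_subset[OF rep_subset]) (simp_all add: finite_P)

lemma rep_unique:
  assumes "x \<in> S" "Z \<subseteq> t ` P" "sum v Z = v x"
  shows "Z = rep x"
proof -
  have "inj_on (sum v) (Pow (t ` P))"
    using finite_P basis by (intro inj_on_sum_gf2_indep) (simp_all add: gf2_basis_def)
  then show ?thesis
    by (rule inj_onD) (use assms rep_subset[OF assms(1)] sum_rep[OF assms(1)] in simp_all)
qed

lemma fundamental_cocircuit_eq: "fundamental_cocircuit v S (t ` P) z = {x \<in> S. z \<in> rep x}"
  unfolding fundamental_cocircuit_def
proof (intro Collect_cong conj_cong refl)
  fix x assume "x \<in> S"
  show "(\<exists>Z\<subseteq>t ` P. z \<in> Z \<and> sum v Z = v x) \<longleftrightarrow> z \<in> rep x"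
    using rep_unique[OF \<open>x \<in> S\<close>] rep_subset[OF \<open>x \<in> S\<close>] sum_rep[OF \<open>x \<in> S\<close>] by metis
qed

lemma rainbow_insert_rep:
  assumes "B \<in> P" "x \<in> B" "t B \<notin> rep x"
  shows "rainbow P (insert x (rep x))"
proof (rule rainbowI)
  fix B' assume B': "B' \<in> P"
  have "x \<in> S"
    using assms(1,2) block_subset by blast
  then have rep_B': "rep x \<inter> B' \<subseteq> {t B'}"
    using rep_subset transversal_Int_block[OF B'] by blast
  show "\<exists>a. insert x (rep x) \<inter> B' \<subseteq> {a}"
  proof (cases "B' = B")
    case True
    with rep_B' assms(3) show ?thesis by blast
  next
    case False
    with rep_B' assms(1,2) B' block_eqI show ?thesis by blast
  qed
qed

lemma t_in_rep_if_rainbow_indep: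
  assumes rainbow_indep: "\<And>Y. Y \<subseteq> S \<Longrightarrow> rainbow P Y \<Longrightarrow> gf2_indep v Y"
    and B: "B \<in> P" "x \<in> B"
  shows "t B \<in> rep x"
proof (cases "x = t B")
  case True
  have "{t B} = rep x"
    using B True t_in_block block_subset by (intro rep_unique) auto
  then show ?thesis by blast
next
  case False
  have x: "x \<in> S" "x \<notin> t ` P"
    using B False transversal_Int_block block_subset by blast+
  show ?thesis
  proof (rule ccontr)
    assume "t B \<notin> rep x"
    moreover have "insert x (rep x) \<subseteq> S"
      using rep_subset[OF x(1)] x(1) transversal_subset by blast
    ultimately have "gf2_indep v (insert x (rep x))"
      using rainbow_indep rainbow_insert_rep[OF B] by blast
    moreover have "x \<notin> rep x"
      using rep_subset[OF x(1)] x(2) by blast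
    then have "sum v (insert x (rep x)) = v x + v x"
      by (simp add: finite_rep[OF x(1)] sum_rep[OF x(1)])
    ultimately show False
      using gf2_indepD[of v "insert x (rep x)" "insert x (rep x)"] by simp
  qed
qed

text \<open>Summing the representations of the elements \<open>y B\<close> along a chordless cycle \<open>Q\<close>, every
  representative \<open>t B\<close> with \<open>B \<in> Q\<close> occurs exactly twice and cancels; adding the representatives
  that occur an odd number of times yields a rainbow dependent set.\<close>
context
  fixes Q :: "'a set set" and s :: "'a set \<Rightarrow> 'a set" and y :: "'a set \<Rightarrow> 'a"
  assumes own_rep: "\<And>B x. B \<in> P \<Longrightarrow> x \<in> B \<Longrightarrow> t B \<in> rep x"
    and cycle_subset: "Q \<subseteq> P"
    and bij_s: "bij_betw s Q Q"
    and s_neq: "\<And>B. B \<in> Q \<Longrightarrow> s B \<noteq> B"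
    and y_in: "\<And>B. B \<in> Q \<Longrightarrow> y B \<in> s B"
    and t_in_rep_y: "\<And>B. B \<in> Q \<Longrightarrow> t B \<in> rep (y B)"
    and chordless: "\<And>B B' x. B \<in> Q \<Longrightarrow> B' \<in> Q \<Longrightarrow> x \<in> B' \<Longrightarrow> t B \<in> rep x \<Longrightarrow>
      B' = B \<or> B' = s B"
begin

lemma s_in_cycle: "B \<in> Q \<Longrightarrow> s B \<in> Q"
  using bij_betwE[OF bij_s] by blast

lemma y_in_S: "B \<in> Q \<Longrightarrow> y B \<in> S"
  using y_in s_in_cycle cycle_subset block_subset by blast

lemma inj_on_y: "inj_on y Q"
proof (rule inj_onI)
  fix B B' assume "B \<in> Q" "B' \<in> Q" "y B = y B'"
  then have "s B = s B'"
    using block_eqI y_in s_in_cycle cycle_subset by (metis subsetD)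
  then show "B = B'"
    using inj_onD[OF bij_betw_imp_inj_on[OF bij_s]] \<open>B \<in> Q\<close> \<open>B' \<in> Q\<close> by blast
qed

lemma card_cycle_reaching: "B \<in> Q \<Longrightarrow> card {B' \<in> Q. t B \<in> rep (y B')} = 2"
proof -
  assume B: "B \<in> Q"
  obtain B1 where B1: "B1 \<in> Q" "s B1 = B"
    using bij_s B by (metis bij_betw_def imageE)
  have inj: "inj_on s Q"
    using bij_s by (rule bij_betw_imp_inj_on)
  have "{B' \<in> Q. t B \<in> rep (y B')} = {B, B1}"
  proof (intro equalityI subsetI)
    fix B' assume "B' \<in> {B' \<in> Q. t B \<in> rep (y B')}"
    then have B': "B' \<in> Q" "t B \<in> rep (y B')"
      by auto
    then have "s B' = B \<or> s B' = s B"
      using chordless[OF B s_in_cycle y_in] by blast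
    then show "B' \<in> {B, B1}"
      using inj_onD[OF inj, of B' B1] inj_onD[OF inj, of B' B] B B1 B'(1) by auto
  next
    fix B' assume "B' \<in> {B, B1}"
    moreover have "t B \<in> rep (y B1)"
      using own_rep[of B "y B1"] y_in[OF B1(1)] B1(2) B cycle_subset by blast
    ultimately show "B' \<in> {B' \<in> Q. t B \<in> rep (y B')}"
      using B B1(1) t_in_rep_y by blast
  qed
  moreover have "B \<noteq> B1"
    using s_neq[OF B1(1)] B1(2) by blast
  ultimately show ?thesis
    by simp
qed

lemma sum_image_y:
  "sum v (y ` Q) = sum v {z \<in> t ` P - t ` Q. odd (card {B \<in> Q. z \<in> rep (y B)})}"
proof -
  have "finite Q"
    using cycle_subset finite_P by (rule finite_subset)
  have "sum v (y ` Q) = (\<Sum>B\<in>Q. sum v (rep (y B)))"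
    using sum.reindex[OF inj_on_y, of v] sum_rep[OF y_in_S] by simp
  also have "\<dots> = sum v {z \<in> t ` P. odd (card {B \<in> Q. z \<in> rep (y B)})}"
    using \<open>finite Q\<close> finite_P rep_subset[OF y_in_S] by (intro sum_sum_gf2_vector) auto
  also have "{z \<in> t ` P. odd (card {B \<in> Q. z \<in> rep (y B)})} =
      {z \<in> t ` P - t ` Q. odd (card {B \<in> Q. z \<in> rep (y B)})}"
    using card_cycle_reaching by auto
  finally show ?thesis .
qed

lemma y_in_block_iff: "B \<in> Q \<Longrightarrow> B' \<in> P \<Longrightarrow> y B \<in> B' \<longleftrightarrow> B' = s B"
  using block_eqI y_in s_in_cycle cycle_subset by blast

lemma image_y_Int_transversal: "y ` Q \<inter> (t ` P - t ` Q) = {}"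
  using transversal_Int_block y_in s_in_cycle cycle_subset by blast

lemma rainbow_image_y_Un:
  assumes W: "W \<subseteq> t ` P - t ` Q"
  shows "rainbow P (y ` Q \<union> W)"
proof (rule rainbowI)
  fix B' assume B': "B' \<in> P"
  have W_B': "W \<inter> B' \<subseteq> {t B'}"
    using W transversal_Int_block[OF B'] by blast
  show "\<exists>a. (y ` Q \<union> W) \<inter> B' \<subseteq> {a}"
  proof (cases "B' \<in> Q")
    case True
    then obtain B0 where "B0 \<in> Q" "s B0 = B'"
      using bij_s by (metis bij_betw_def imageE)
    then have "B = B0" if "B \<in> Q" "y B \<in> B'" for B
      using that y_in_block_iff[OF that(1) B'] inj_onD[OF bij_betw_imp_inj_on[OF bij_s]] by metis
    moreover have "W \<inter> B' = {}"
      using W_B' W True by blast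
    ultimately have "(y ` Q \<union> W) \<inter> B' \<subseteq> {y B0}"
      by blast
    then show ?thesis by blast
  next
    case False
    then have "(y ` Q \<union> W) \<inter> B' \<subseteq> {t B'}"
      using W_B' y_in_block_iff B' s_in_cycle by auto
    then show ?thesis by blast
  qed
qed

lemma rainbow_dependent_set:
  assumes "Q \<noteq> {}"
  obtains Y where "Y \<subseteq> S" "Y \<noteq> {}" "sum v Y = 0" "rainbow P Y"
proof
  define W where "W = {z \<in> t ` P - t ` Q. odd (card {B \<in> Q. z \<in> rep (y B)})}"
  have W: "W \<subseteq> t ` P - t ` Q"
    unfolding W_def by blast
  show "y ` Q \<union> W \<subseteq> S"
    using y_in_S W transversal_subset by blast
  show "y ` Q \<union> W \<noteq> {}"
    using assms by blast
  show "rainbow P (y ` Q \<union> W)"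
    using W by (rule rainbow_image_y_Un)
  have "finite W"
    using W finite_P finite_subset by blast
  moreover have "y ` Q \<inter> W = {}"
    using image_y_Int_transversal W by blast
  ultimately have "sum v (y ` Q \<union> W) = sum v (y ` Q) + sum v W"
    using finite_subset[OF cycle_subset finite_P] by (intro sum.union_disjoint) auto
  also have "sum v (y ` Q) = sum v W"
    unfolding W_def by (rule sum_image_y)
  finally show "sum v (y ` Q \<union> W) = 0"
    by (simp only: add_self_gf2_vector)
qed

end

lemma exists_block_containing_cocircuit:
  assumes rainbow_indep: "\<And>Y. Y \<subseteq> S \<Longrightarrow> rainbow P Y \<Longrightarrow> gf2_indep v Y"
    and "P \<noteq> {}"
  shows "\<exists>B\<in>P. fundamental_cocircuit v S (t ` P) (t B) \<subseteq> B"
proof (rule ccontr)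
  assume no_block: "\<not> ?thesis"
  define R where "R B B' \<longleftrightarrow> B' \<noteq> B \<and> (\<exists>x\<in>B'. t B \<in> rep x)" for B B'
  have successor: "\<exists>B'\<in>P. R B B'" if "B \<in> P" for B
  proof -
    have "\<not> fundamental_cocircuit v S (t ` P) (t B) \<subseteq> B"
      using no_block that by blast
    then obtain x where "x \<in> S" "t B \<in> rep x" "x \<notin> B"
      by (auto simp: fundamental_cocircuit_eq)
    moreover obtain B' where "B' \<in> P" "x \<in> B'"
      using \<open>x \<in> S\<close> partition_onD1[OF partition] by blast
    ultimately show ?thesis
      unfolding R_def by blast
  qed
  obtain Q s where Q: "Q \<subseteq> P" "Q \<noteq> {}" "bij_betw s Q Q" and R_s: "\<And>B. B \<in> Q \<Longrightarrow> R B (s B)"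
    and chordless: "\<And>B B'. B \<in> Q \<Longrightarrow> B' \<in> Q \<Longrightarrow> R B B' \<Longrightarrow> B' = s B"
    using finite_chordless_cycle[of P R] finite_P \<open>P \<noteq> {}\<close> successor by blast
  have "\<exists>x\<in>s B. t B \<in> rep x" if "B \<in> Q" for B
    using R_s[OF that] unfolding R_def by blast
  then obtain y where y: "\<And>B. B \<in> Q \<Longrightarrow> y B \<in> s B \<and> t B \<in> rep (y B)"
    by metis
  obtain Y where "Y \<subseteq> S" "Y \<noteq> {}" "sum v Y = 0" "rainbow P Y"
  proof (rule rainbow_dependent_set[of Q s y])
    show "t B \<in> rep x" if "B \<in> P" "x \<in> B" for B x
      using t_in_rep_if_rainbow_indep[OF rainbow_indep that] .
    show "B' = B \<or> B' = s B" if "B \<in> Q" "B' \<in> Q" "x \<in> B'" "t B \<in> rep x" for B B' x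
      using chordless[of B B'] that unfolding R_def by blast
    show "s B \<noteq> B" if "B \<in> Q" for B
      using R_s[OF that] unfolding R_def by blast
  qed (use Q y in simp_all)
  then show False
    using gf2_indepD[OF rainbow_indep, of Y Y] by blast
qed

end

lemma rainbow_circuit_free_block_contains_cocircuit:
  fixes v :: "'a \<Rightarrow> nat \<Rightarrow> bit"
  assumes "finite S" "S \<noteq> {}" "partition_on S P"
    and rank: "card P = mrank S (\<lambda>X. X \<subseteq> S \<and> gf2_indep v X)"
    and rainbow_free: "rainbow_circuit_free S (\<lambda>X. X \<subseteq> S \<and> gf2_indep v X) P"
  obtains T t B where "gf2_basis v S T" "t \<in> T" "B \<in> P" "fundamental_cocircuit v S T t \<subseteq> B"
proof -
  have rainbow_indep: "gf2_indep v Y" if "Y \<subseteq> S" "rainbow P Y" for Y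
    using indep_if_rainbow[OF \<open>finite S\<close> rainbow_free that] by simp
  obtain t where t: "\<And>B. B \<in> P \<Longrightarrow> t B \<in> B"
    using partition_onD3[OF \<open>partition_on S P\<close>] by (metis ex_in_conv)
  interpret transversal S P t
    using assms(1,3) t by unfold_locales
  have indep_T: "gf2_indep v (t ` P)"
    using rainbow_indep transversal_subset rainbow_transversal by blast
  have "v x \<in> gf2_span v (t ` P)" if "x \<in> S" for x
  proof (rule ccontr)
    assume "v x \<notin> gf2_span v (t ` P)"
    then have "gf2_indep v (insert x (t ` P))" "x \<notin> t ` P"
      using gf2_indep_insert[OF finite_imageI[OF finite_P] indep_T]
        gf2_span_def[of v "t ` P"] by force+
    then have "card (insert x (t ` P)) \<le> card P"
      using card_le_mrank[OF \<open>finite S\<close>, of _ "\<lambda>X. X \<subseteq> S \<and> gf2_indep v X"] rank that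
        transversal_subset by simp
    with \<open>x \<notin> t ` P\<close> finite_P card_transversal show False
      by simp
  qed
  then interpret gf2_transversal S P t v
    using indep_T transversal_subset by unfold_locales (auto simp: gf2_basis_def)
  have "P \<noteq> {}"
    using \<open>S \<noteq> {}\<close> partition_onD1[OF \<open>partition_on S P\<close>] by blast
  then obtain B where "B \<in> P" "fundamental_cocircuit v S (t ` P) (t B) \<subseteq> B"
    using exists_block_containing_cocircuit rainbow_indep by blast
  then show ?thesis
    using that basis by blast
qed

section \<open>Multilinear polynomials over GF(2)\<close>

text \<open>A multilinear polynomial over GF(2) is represented by its set of monomials, a monomial by its
  set of variables, and a point of \<open>GF(2)^n\<close> by its support.\<close>
definition mpoly_eval :: "'a set set \<Rightarrow> 'a set \<Rightarrow> bit" where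
  "mpoly_eval \<A> p = (\<Sum>M\<in>\<A>. of_bool (M \<subseteq> p))"

lemma card_supersets_in_Pow:
  assumes "finite M" "K \<subseteq> M"
  shows "card {q \<in> Pow M. K \<subseteq> q} = 2 ^ card (M - K)"
proof -
  have "{q \<in> Pow M. K \<subseteq> q} = (\<union>) K ` Pow (M - K)"
    using assms(2) by (auto intro!: image_eqI[of _ _ "_ - K"])
  moreover have "inj_on ((\<union>) K) (Pow (M - K))"
    by (rule inj_onI) blast
  ultimately show ?thesis
    using assms(1) by (simp add: card_image card_Pow)
qed

lemma mpoly_eval_Pow:
  assumes "finite q"
  shows "mpoly_eval (Pow q) p = of_bool (q \<inter> p = {})"
proof -
  have "mpoly_eval (Pow q) p = of_bool (odd (card {M \<in> Pow q. M \<subseteq> p}))"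
    unfolding mpoly_eval_def using assms by (simp only: sum_of_bool_gf2 finite_Pow_iff)
  also have "card {M \<in> Pow q. M \<subseteq> p} = card (Pow (q \<inter> p))"
    by (rule arg_cong[where f = card]) blast
  also have "\<dots> = 2 ^ card (q \<inter> p)"
    using assms by (intro card_Pow) blast
  finally show ?thesis
    using assms by simp
qed

text \<open>On the points \<open>q \<union> r\<close> with \<open>q \<subseteq> M0\<close>, a monomial \<open>M\<close> is nonzero at either none or
  \<open>2 ^ card (M0 - M)\<close> of them; as \<open>M0\<close> is maximal, this is odd only for \<open>M = M0\<close>.\<close>
lemma sum_cube_mpoly_eval:
  assumes "finite \<A>" "finite M0" "M0 \<in> \<A>" "\<And>M. M \<in> \<A> \<Longrightarrow> M0 \<subseteq> M \<Longrightarrow> M = M0"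
    and "r \<inter> M0 = {}"
  shows "(\<Sum>q\<in>Pow M0. mpoly_eval \<A> (q \<union> r)) = 1"
proof -
  have parity: "odd (card {q \<in> Pow M0. M \<subseteq> q \<union> r}) \<longleftrightarrow> M = M0" if "M \<in> \<A>" for M
  proof (cases "M \<subseteq> M0 \<union> r")
    case True
    then have "{q \<in> Pow M0. M \<subseteq> q \<union> r} = {q \<in> Pow M0. M \<inter> M0 \<subseteq> q}"
      using assms(5) by blast
    then have "card {q \<in> Pow M0. M \<subseteq> q \<union> r} = 2 ^ card (M0 - M)"
      using card_supersets_in_Pow[OF assms(2), of "M \<inter> M0"] by (simp add: Diff_Int)
    then show ?thesis
      using assms(2,4) that by (auto simp: Diff_eq_empty_iff)
  next
    case False
    then have "{q \<in> Pow M0. M \<subseteq> q \<union> r} = {}" "M \<noteq> M0"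
      by blast+
    then show ?thesis
      by (simp only: card.empty) simp
  qed
  have "(\<Sum>q\<in>Pow M0. of_bool (M \<subseteq> q \<union> r) :: bit) = of_bool (M = M0)" if "M \<in> \<A>" for M
    using assms(2) by (simp only: sum_of_bool_gf2 finite_Pow_iff parity[OF that])
  then have "(\<Sum>M\<in>\<A>. \<Sum>q\<in>Pow M0. of_bool (M \<subseteq> q \<union> r)) = (\<Sum>M\<in>\<A>. of_bool (M = M0) :: bit)"
    by (rule sum.cong[OF refl])
  then show ?thesis
    using assms(1,3) by (simp add: mpoly_eval_def sum.swap[of _ "Pow M0"] of_bool_def)
qed

lemma card_nonzeros_mpoly_eval:
  assumes "\<A> \<noteq> {}" "\<And>M. M \<in> \<A> \<Longrightarrow> M \<subseteq> {..<m} \<and> card M \<le> d"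
  shows "2 ^ (m - d) \<le> card {p \<in> Pow {..<m}. mpoly_eval \<A> p \<noteq> 0}"
proof -
  have "finite \<A>"
    using assms(2) by (meson PowI finite_Pow_iff finite_lessThan finite_subset subsetI)
  then obtain M0 where M0: "M0 \<in> \<A>" "\<And>M. M \<in> \<A> \<Longrightarrow> M0 \<subseteq> M \<Longrightarrow> M = M0"
    using finite_has_maximal[OF _ assms(1)] by metis
  have "finite M0" "M0 \<subseteq> {..<m}" "card M0 \<le> d"
    using assms(2)[OF M0(1)] finite_subset by auto
  define R where "R = {..<m} - M0"
  have "\<exists>q\<subseteq>M0. mpoly_eval \<A> (q \<union> r) \<noteq> 0" if "r \<subseteq> R" for r
  proof (rule ccontr)
    assume "\<not> ?thesis"
    then have "(\<Sum>q\<in>Pow M0. mpoly_eval \<A> (q \<union> r)) = 0"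
      by (intro sum.neutral) auto
    moreover have "r \<inter> M0 = {}"
      using that by (auto simp: R_def)
    ultimately show False
      using sum_cube_mpoly_eval[OF \<open>finite \<A>\<close> \<open>finite M0\<close> M0] by simp
  qed
  then obtain q where q: "\<And>r. r \<subseteq> R \<Longrightarrow> q r \<subseteq> M0 \<and> mpoly_eval \<A> (q r \<union> r) \<noteq> 0"
    by metis
  have "(q r \<union> r) \<inter> R = r" if "r \<subseteq> R" for r
    using q[OF that] that by (auto simp: R_def)
  then have "inj_on (\<lambda>r. q r \<union> r) (Pow R)"
    by (metis (no_types, lifting) PowD inj_onI)
  moreover have "(\<lambda>r. q r \<union> r) ` Pow R \<subseteq> {p \<in> Pow {..<m}. mpoly_eval \<A> p \<noteq> 0}"
    using q \<open>M0 \<subseteq> {..<m}\<close> by (auto simp: R_def)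
  ultimately have "card (Pow R) \<le> card {p \<in> Pow {..<m}. mpoly_eval \<A> p \<noteq> 0}"
    by (intro card_inj_on_le) auto
  moreover have "card R = m - card M0"
    using \<open>M0 \<subseteq> {..<m}\<close> \<open>finite M0\<close> by (simp add: R_def card_Diff_subset)
  then have "(2::nat) ^ (m - d) \<le> card (Pow R)"
    using \<open>card M0 \<le> d\<close> by (simp add: R_def card_Pow)
  ultimately show ?thesis
    by linarith
qed

lemma exists_mpoly_vanishing:
  assumes "finite \<M>" "finite Z" "card Z < card \<M>"
  obtains \<A> where "\<A> \<subseteq> \<M>" "\<A> \<noteq> {}" "\<And>z. z \<in> Z \<Longrightarrow> mpoly_eval \<A> (set_decode z) = 0"
proof -
  define w where "w M z = (of_bool (z \<in> Z \<and> M \<subseteq> set_decode z) :: bit)" for M z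
  have "\<not> gf2_indep w \<M>"
    using card_le_if_gf2_indep_supported[OF assms(2), of w \<M>] assms(3) by (auto simp: w_def)
  then obtain \<A> where "\<A> \<subseteq> \<M>" "\<A> \<noteq> {}" "sum w \<A> = 0"
    unfolding gf2_indep_iff by blast
  moreover have "mpoly_eval \<A> (set_decode z) = sum w \<A> z" if "z \<in> Z" for z
    using that by (simp add: mpoly_eval_def sum_fun_apply w_def)
  ultimately show ?thesis
    using that by simp
qed

section \<open>The Reed--Muller matroid\<close>

definition hypercube :: "nat \<Rightarrow> nat set" where
  "hypercube m = set_encode ` Pow {..<m}"

text \<open>Points of \<open>GF(2)^m\<close> and monomials are both encoded as natural numbers via their supports.
  The column of the point \<open>x\<close> in the generator matrix of the Reed--Muller code \<open>RM(d, m)\<close>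
  lists the values at \<open>x\<close> of all monomials of degree at most \<open>d\<close>.\<close>
definition rm_column :: "nat \<Rightarrow> nat \<Rightarrow> nat \<Rightarrow> bit" where
  "rm_column d x i = of_bool (card (set_decode i) \<le> d \<and> set_decode i \<subseteq> set_decode x)"

lemma finite_hypercube: "finite (hypercube m)"
  by (simp add: hypercube_def)

lemma set_decode_hypercube: "x \<in> hypercube m \<Longrightarrow> set_decode x \<subseteq> {..<m}"
  by (auto simp: hypercube_def finite_subset)

lemma set_encode_in_hypercube: "p \<subseteq> {..<m} \<Longrightarrow> set_encode p \<in> hypercube m"
  by (simp add: hypercube_def)

lemma inj_on_set_encode_Pow: "inj_on set_encode (Pow {..<m})"
  by (rule inj_on_subset[OF inj_on_set_encode]) (auto intro: finite_subset)

lemma sum_rm_column_monomials: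
  assumes "\<And>M. M \<in> \<A> \<Longrightarrow> finite M \<and> card M \<le> d"
  shows "(\<Sum>M\<in>\<A>. sum (rm_column d) Y (set_encode M)) = (\<Sum>y\<in>Y. mpoly_eval \<A> (set_decode y))"
proof -
  have "(\<Sum>M\<in>\<A>. sum (rm_column d) Y (set_encode M)) = (\<Sum>M\<in>\<A>. \<Sum>y\<in>Y. of_bool (M \<subseteq> set_decode y))"
    using assms by (intro sum.cong refl) (simp add: sum_fun_apply rm_column_def)
  then show ?thesis
    by (simp add: mpoly_eval_def sum.swap[of _ Y])
qed

lemma gf2_indep_rm_columnI:
  assumes "finite X"
    and "\<And>Y. Y \<subseteq> X \<Longrightarrow> Y \<noteq> {} \<Longrightarrow> \<exists>\<A>. (\<forall>M\<in>\<A>. finite M \<and> card M \<le> d) \<and>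
      (\<exists>y0\<in>Y. mpoly_eval \<A> (set_decode y0) = 1 \<and> (\<forall>y\<in>Y - {y0}. mpoly_eval \<A> (set_decode y) = 0))"
  shows "gf2_indep (rm_column d) X"
  unfolding gf2_indep_iff
proof (intro allI impI notI)
  fix Y assume Y: "Y \<subseteq> X" "Y \<noteq> {}" and "sum (rm_column d) Y = 0"
  obtain \<A> y0 where \<A>: "\<forall>M\<in>\<A>. finite M \<and> card M \<le> d" and "y0 \<in> Y"
    and y0: "mpoly_eval \<A> (set_decode y0) = 1" "\<forall>y\<in>Y - {y0}. mpoly_eval \<A> (set_decode y) = 0"
    using assms(2)[OF Y] by blast
  have "finite Y"
    using Y(1) assms(1) by (rule finite_subset)
  have "0 = (\<Sum>y\<in>Y. mpoly_eval \<A> (set_decode y))"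
    using sum_rm_column_monomials[of \<A> d Y] \<A> \<open>sum (rm_column d) Y = 0\<close> by simp
  also have "\<dots> = 1"
    using y0 \<open>y0 \<in> Y\<close> \<open>finite Y\<close> by (simp add: sum.remove)
  finally show False
    by simp
qed

lemma inj_set_decode: "inj set_decode"
  by (metis injI set_decode_inverse)

lemma gf2_indep_low_weight:
  assumes "finite X" "\<And>x. x \<in> X \<Longrightarrow> card (set_decode x) \<le> d"
  shows "gf2_indep (rm_column d) X"
proof (rule gf2_indep_rm_columnI[OF assms(1)])
  fix Y assume "Y \<subseteq> X" "Y \<noteq> {}"
  then obtain y0 where "y0 \<in> Y" and max: "\<And>y. y \<in> Y \<Longrightarrow> set_decode y0 \<subseteq> set_decode y \<Longrightarrow> y = y0"
    using finite_has_maximal[of "set_decode ` Y"] finite_subset[OF _ assms(1)]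
    by (metis (no_types, lifting) finite_imageI image_iff image_is_empty inj_set_decode inj_eq)
  have "mpoly_eval {set_decode y0} (set_decode y) = of_bool (y = y0)" if "y \<in> Y" for y
    using max[OF that] by (auto simp: mpoly_eval_def simp del: sum_of_bool_eq)
  then show "\<exists>\<A>. (\<forall>M\<in>\<A>. finite M \<and> card M \<le> d) \<and>
      (\<exists>y0\<in>Y. mpoly_eval \<A> (set_decode y0) = 1 \<and> (\<forall>y\<in>Y - {y0}. mpoly_eval \<A> (set_decode y) = 0))"
    using \<open>y0 \<in> Y\<close> \<open>Y \<subseteq> X\<close> assms(2) by (intro exI[of _ "{set_decode y0}"]) auto
qed

lemma gf2_indep_high_weight:
  assumes "finite X" "m \<le> 2 * d + 1"
    and "\<And>x. x \<in> X \<Longrightarrow> set_decode x \<subseteq> {..<m} \<and> d < card (set_decode x)"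
  shows "gf2_indep (rm_column d) X"
proof (rule gf2_indep_rm_columnI[OF assms(1)])
  fix Y assume "Y \<subseteq> X" "Y \<noteq> {}"
  then obtain y0 where "y0 \<in> Y" and min: "\<And>y. y \<in> Y \<Longrightarrow> set_decode y \<subseteq> set_decode y0 \<Longrightarrow> y = y0"
    using finite_has_minimal[of "set_decode ` Y"] finite_subset[OF _ assms(1)]
    by (metis (no_types, lifting) finite_imageI image_iff image_is_empty inj_set_decode inj_eq)
  define q where "q = {..<m} - set_decode y0"
  have "set_decode y0 \<subseteq> {..<m}" "d < card (set_decode y0)"
    using assms(3) \<open>y0 \<in> Y\<close> \<open>Y \<subseteq> X\<close> by auto
  then have "card q \<le> d"
    using assms(2) by (simp add: q_def card_Diff_subset)
  have "mpoly_eval (Pow q) (set_decode y) = of_bool (y = y0)" if "y \<in> Y" for y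
    using min[OF that] assms(3) that \<open>Y \<subseteq> X\<close> by (auto simp: mpoly_eval_Pow q_def)
  moreover have "finite q"
    by (simp add: q_def)
  then have "\<forall>M\<in>Pow q. finite M \<and> card M \<le> d"
    using \<open>card q \<le> d\<close> by (meson PowD card_mono finite_subset order_trans)
  ultimately show "\<exists>\<A>. (\<forall>M\<in>\<A>. finite M \<and> card M \<le> d) \<and>
      (\<exists>y0\<in>Y. mpoly_eval \<A> (set_decode y0) = 1 \<and> (\<forall>y\<in>Y - {y0}. mpoly_eval \<A> (set_decode y) = 0))"
    using \<open>y0 \<in> Y\<close> by (intro exI[of _ "Pow q"]) auto
qed

lemma loopless_rm_column: "loopless (hypercube m) (\<lambda>X. X \<subseteq> hypercube m \<and> gf2_indep (rm_column d) X)"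
proof -
  have "rm_column d x (set_encode {}) = 1" for x
    by (simp add: rm_column_def)
  then have "rm_column d x \<noteq> 0" for x
    by (metis one_neq_zero zero_fun_apply)
  then show ?thesis
    by (auto simp: loopless_def gf2_indep_iff subset_singleton_iff)
qed

lemma coverable_2_rm_column:
  assumes "m \<le> 2 * d + 1"
  shows "coverable 2 (hypercube m) (\<lambda>X. X \<subseteq> hypercube m \<and> gf2_indep (rm_column d) X)"
  unfolding coverable_def
proof (intro exI conjI)
  let ?low = "{x \<in> hypercube m. card (set_decode x) \<le> d}"
  let ?high = "{x \<in> hypercube m. d < card (set_decode x)}"
  show "finite {?low, ?high}" "card {?low, ?high} \<le> 2" "hypercube m \<subseteq> \<Union> {?low, ?high}"
    by (auto simp: card_insert_if)
  have "gf2_indep (rm_column d) ?low"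
    by (rule gf2_indep_low_weight) (simp_all add: finite_hypercube)
  moreover have "gf2_indep (rm_column d) ?high"
    using assms by (intro gf2_indep_high_weight) (auto simp: finite_hypercube dest: set_decode_hypercube)
  ultimately show "\<forall>I\<in>{?low, ?high}. I \<subseteq> hypercube m \<and> gf2_indep (rm_column d) I"
    by auto
qed

lemma mpoly_eval_linear:
  assumes "\<And>M. M \<in> \<A> \<Longrightarrow> finite M \<and> card M \<le> d" "sum (rm_column d) Z = rm_column d x"
  shows "mpoly_eval \<A> (set_decode x) = (\<Sum>z\<in>Z. mpoly_eval \<A> (set_decode z))"
  using sum_rm_column_monomials[of \<A> d "{x}", OF assms(1)] sum_rm_column_monomials[of \<A> d Z, OF assms(1)]
  by (simp add: assms(2))

lemma card_gf2_indep_rm_column_le: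
  assumes "X \<subseteq> hypercube m" "gf2_indep (rm_column d) X"
  shows "card X \<le> card {M \<in> Pow {..<m}. card M \<le> d}"
proof -
  let ?monomials = "{M \<in> Pow {..<m}. card M \<le> d}"
  have outside: "rm_column d x i = 0" if "x \<in> X" "i \<notin> set_encode ` ?monomials" for x i
    using that set_decode_hypercube[of x m] assms(1)
    by (auto simp: rm_column_def intro!: image_eqI[of i _ "set_decode i"])
  have "card X \<le> card (set_encode ` ?monomials)"
    by (rule card_le_if_gf2_indep_supported[OF _ assms(2) outside]) simp
  also have "\<dots> = card ?monomials"
    by (intro card_image inj_on_subset[OF inj_on_set_encode_Pow]) auto
  finally show ?thesis .
qed

lemma mpoly_support_subset_fundamental_cocircuit:
  assumes basis: "gf2_basis (rm_column d) (hypercube m) T"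
    and degree: "\<And>M. M \<in> \<A> \<Longrightarrow> finite M \<and> card M \<le> d"
    and vanish: "\<And>z. z \<in> T - {t} \<Longrightarrow> mpoly_eval \<A> (set_decode z) = 0"
  shows "set_encode ` {p \<in> Pow {..<m}. mpoly_eval \<A> p \<noteq> 0}
    \<subseteq> fundamental_cocircuit (rm_column d) (hypercube m) T t"
proof clarify
  fix p assume p: "p \<subseteq> {..<m}" "mpoly_eval \<A> p \<noteq> 0"
  have x: "set_encode p \<in> hypercube m" "set_decode (set_encode p) = p"
    using p(1) by (auto simp: set_encode_in_hypercube finite_subset)
  moreover have "rm_column d ` hypercube m \<subseteq> gf2_span (rm_column d) T"
    using basis by (simp add: gf2_basis_def)
  ultimately obtain Z where "Z \<in> Pow T" "rm_column d (set_encode p) = sum (rm_column d) Z"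
    unfolding gf2_span_def by blast
  then have "Z \<subseteq> T" "mpoly_eval \<A> p = (\<Sum>z\<in>Z. mpoly_eval \<A> (set_decode z))"
    using mpoly_eval_linear[of \<A> d Z "set_encode p", OF degree] x(2) by simp_all
  moreover have "(\<Sum>z\<in>Z. mpoly_eval \<A> (set_decode z)) = 0" if "t \<notin> Z"
    using vanish \<open>Z \<subseteq> T\<close> that by (intro sum.neutral) blast
  ultimately have "t \<in> Z"
    using p(2) by metis
  with \<open>Z \<subseteq> T\<close> show "set_encode p \<in> fundamental_cocircuit (rm_column d) (hypercube m) T t"
    unfolding fundamental_cocircuit_def using x(1) \<open>rm_column d (set_encode p) = sum (rm_column d) Z\<close>
    by auto
qed

lemma card_fundamental_cocircuit_rm_column:
  assumes basis: "gf2_basis (rm_column d) (hypercube m) T" and "t \<in> T"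
  shows "2 ^ (m - d) \<le> card (fundamental_cocircuit (rm_column d) (hypercube m) T t)"
proof -
  let ?monomials = "{M \<in> Pow {..<m}. card M \<le> d}"
  have T: "T \<subseteq> hypercube m" "gf2_indep (rm_column d) T"
    using basis unfolding gf2_basis_def by simp_all
  have "finite T"
    using T(1) finite_hypercube by (rule finite_subset)
  then have "card (T - {t}) < card T"
    using \<open>t \<in> T\<close> by (rule card_Diff1_less)
  also have "\<dots> \<le> card ?monomials"
    by (rule card_gf2_indep_rm_column_le[OF T])
  finally obtain \<A> where \<A>: "\<A> \<subseteq> ?monomials" "\<A> \<noteq> {}"
    and vanish: "\<And>z. z \<in> T - {t} \<Longrightarrow> mpoly_eval \<A> (set_decode z) = 0"
    using exists_mpoly_vanishing[of ?monomials "T - {t}"] \<open>finite T\<close> by auto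
  have degree: "\<And>M. M \<in> \<A> \<Longrightarrow> finite M \<and> card M \<le> d"
    using \<A>(1) finite_subset by auto
  have "2 ^ (m - d) \<le> card {p \<in> Pow {..<m}. mpoly_eval \<A> p \<noteq> 0}"
    using \<A> by (intro card_nonzeros_mpoly_eval) auto
  also have "\<dots> = card (set_encode ` {p \<in> Pow {..<m}. mpoly_eval \<A> p \<noteq> 0})"
    by (intro card_image[symmetric] inj_on_subset[OF inj_on_set_encode_Pow]) auto
  also have "\<dots> \<le> card (fundamental_cocircuit (rm_column d) (hypercube m) T t)"
  proof (rule card_mono[OF _ mpoly_support_subset_fundamental_cocircuit[OF basis degree vanish]])
    show "finite (fundamental_cocircuit (rm_column d) (hypercube m) T t)"
      unfolding fundamental_cocircuit_def by (rule finite_subset[OF _ finite_hypercube]) blast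
  qed
  finally show ?thesis .
qed

lemma rainbow_circuit_free_rm_column_large_block:
  assumes "partition_on (hypercube m) P"
    and "rank_preserving (hypercube m) (\<lambda>X. X \<subseteq> hypercube m \<and> gf2_indep (rm_column d) X) P"
    and "rainbow_circuit_free (hypercube m) (\<lambda>X. X \<subseteq> hypercube m \<and> gf2_indep (rm_column d) X) P"
  shows "\<exists>B\<in>P. 2 ^ (m - d) \<le> card B"
proof -
  have "hypercube m \<noteq> {}"
    using set_encode_in_hypercube[of "{}" m] by blast
  then obtain T t B where "gf2_basis (rm_column d) (hypercube m) T" "t \<in> T" "B \<in> P"
    and cocircuit_B: "fundamental_cocircuit (rm_column d) (hypercube m) T t \<subseteq> B"
    using rainbow_circuit_free_block_contains_cocircuit[OF finite_hypercube _ assms(1) _ assms(3)]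
      assms(2) unfolding rank_preserving_def by blast
  then have "2 ^ (m - d) \<le> card (fundamental_cocircuit (rm_column d) (hypercube m) T t)"
    by (intro card_fundamental_cocircuit_rm_column)
  also have "\<dots> \<le> card B"
  proof (rule card_mono[OF _ cocircuit_B])
    show "finite B"
      using partition_onD1[OF assms(1)] \<open>B \<in> P\<close> finite_hypercube[of m]
      by (metis Union_upper finite_subset)
  qed
  finally show ?thesis
    using \<open>B \<in> P\<close> by blast
qed

theorem theorem6:
  fixes g :: nat
  assumes "g > 0"
  shows "\<exists>(S :: nat set) indep.
           matroid S indep \<and> binary S indep \<and> loopless S indep \<and> coverable 2 S indep \<and>
           (\<forall>P. partition_on S P \<longrightarrow> rank_preserving S indep P \<longrightarrow>
                rainbow_circuit_free S indep P \<longrightarrow> (\<exists>B\<in>P. card B \<ge> g))"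
proof (intro exI conjI allI impI)
  define m where "m = 2 * g + 1"
  let ?S = "hypercube m" and ?indep = "\<lambda>X. X \<subseteq> hypercube m \<and> gf2_indep (rm_column g) X"
  show "matroid ?S ?indep"
    by (rule matroid_gf2_indep[OF finite_hypercube])
  show "binary ?S ?indep"
    unfolding binary_def by blast
  show "loopless ?S ?indep"
    by (rule loopless_rm_column)
  show "coverable 2 ?S ?indep"
    by (rule coverable_2_rm_column) (simp add: m_def)
  fix P assume "partition_on ?S P" "rank_preserving ?S ?indep P" "rainbow_circuit_free ?S ?indep P"
  then obtain B where "B \<in> P" "2 ^ (m - g) \<le> card B"
    using rainbow_circuit_free_rm_column_large_block by blast
  moreover have "g < 2 ^ (m - g)"
    using less_exp[of g] less_exp[of "Suc g"] by (simp only: m_def) simp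
  ultimately show "\<exists>B\<in>P. g \<le> card B"
    by force
qed

end
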